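(* Let $(R,+,\cdot)$ be a finite simple additively idempotent semiring with $|R|>2$. Then there exists a finite idempotent irreducible $R$-semimodule.
   Context: A semiring is a nonempty set with a commutative semigroup operation $+$ and a semigroup operation $\cdot$ satisfying both distributive laws; simple if its only congruences are the identity and the full relation; additively idempotent if $r+r=r$ for all $r$. An $R$-semimodule is a commutative semigroup $(M,+)$ with an action $R\times M\to M$ satisfying $r(sx)=(rs)x$, $(r+s)x=rx+sx$, $r(x+y)=rx+ry$; it is idempotent if $x+x=x$. A subsemimodule is a subsemigroup closed under the action; a semimodule congruence is an equivalence compatible with $+$ and the action. $M$ is quasitrivial if $rx=sx$ for all $r,s,x$; id-quasitrivial if $rx=x$ for all $r,x$. $M$ is sub-irreducible if it is not quasitrivial and all proper subsemimodules are id-quasitrivial; quotient-irreducible if not quasitrivial and its only congruences are the identity and $M\times M$; irreducible if both. *)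

theory Defs
  imports Main
begin

definition semiring :: "'a set \<Rightarrow> ('a \<Rightarrow> 'a \<Rightarrow> 'a) \<Rightarrow> ('a \<Rightarrow> 'a \<Rightarrow> 'a) \<Rightarrow> bool" where
  "semiring R add mul \<longleftrightarrow>
     R \<noteq> {} \<and>
     (\<forall>a\<in>R. \<forall>b\<in>R. add a b \<in> R \<and> mul a b \<in> R) \<and>
     (\<forall>a\<in>R. \<forall>b\<in>R. \<forall>c\<in>R. add (add a b) c = add a (add b c)) \<and>
     (\<forall>a\<in>R. \<forall>b\<in>R. add a b = add b a) \<and>
     (\<forall>a\<in>R. \<forall>b\<in>R. \<forall>c\<in>R. mul (mul a b) c = mul a (mul b c)) \<and>
     (\<forall>a\<in>R. \<forall>b\<in>R. \<forall>c\<in>R. mul a (add b c) = add (mul a b) (mul a c)) \<and>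
     (\<forall>a\<in>R. \<forall>b\<in>R. \<forall>c\<in>R. mul (add a b) c = add (mul a c) (mul b c))"

definition semiring_congruence ::
  "'a set \<Rightarrow> ('a \<Rightarrow> 'a \<Rightarrow> 'a) \<Rightarrow> ('a \<Rightarrow> 'a \<Rightarrow> 'a) \<Rightarrow> ('a \<times> 'a) set \<Rightarrow> bool" where
  "semiring_congruence R add mul \<theta> \<longleftrightarrow>
     equiv R \<theta> \<and>
     (\<forall>a b c d. (a, b) \<in> \<theta> \<longrightarrow> (c, d) \<in> \<theta> \<longrightarrow>
        (add a c, add b d) \<in> \<theta> \<and> (mul a c, mul b d) \<in> \<theta>)"

definition simple_semiring :: "'a set \<Rightarrow> ('a \<Rightarrow> 'a \<Rightarrow> 'a) \<Rightarrow> ('a \<Rightarrow> 'a \<Rightarrow> 'a) \<Rightarrow> bool" where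
  "simple_semiring R add mul \<longleftrightarrow>
     semiring R add mul \<and>
     (\<forall>\<theta>. semiring_congruence R add mul \<theta> \<longrightarrow> \<theta> = Id_on R \<or> \<theta> = R \<times> R)"

definition add_idempotent :: "'a set \<Rightarrow> ('a \<Rightarrow> 'a \<Rightarrow> 'a) \<Rightarrow> bool" where
  "add_idempotent R add \<longleftrightarrow> (\<forall>r\<in>R. add r r = r)"

definition semimodule ::
  "'a set \<Rightarrow> ('a \<Rightarrow> 'a \<Rightarrow> 'a) \<Rightarrow> ('a \<Rightarrow> 'a \<Rightarrow> 'a) \<Rightarrow>
   'b set \<Rightarrow> ('b \<Rightarrow> 'b \<Rightarrow> 'b) \<Rightarrow> ('a \<Rightarrow> 'b \<Rightarrow> 'b) \<Rightarrow> bool" where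
  "semimodule R add mul M madd act \<longleftrightarrow>
     M \<noteq> {} \<and>
     (\<forall>x\<in>M. \<forall>y\<in>M. madd x y \<in> M) \<and>
     (\<forall>x\<in>M. \<forall>y\<in>M. \<forall>z\<in>M. madd (madd x y) z = madd x (madd y z)) \<and>
     (\<forall>x\<in>M. \<forall>y\<in>M. madd x y = madd y x) \<and>
     (\<forall>r\<in>R. \<forall>x\<in>M. act r x \<in> M) \<and>
     (\<forall>r\<in>R. \<forall>s\<in>R. \<forall>x\<in>M. act r (act s x) = act (mul r s) x) \<and>
     (\<forall>r\<in>R. \<forall>s\<in>R. \<forall>x\<in>M. act (add r s) x = madd (act r x) (act s x)) \<and>
     (\<forall>r\<in>R. \<forall>x\<in>M. \<forall>y\<in>M. act r (madd x y) = madd (act r x) (act r y))"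

definition idempotent_semimodule :: "'b set \<Rightarrow> ('b \<Rightarrow> 'b \<Rightarrow> 'b) \<Rightarrow> bool" where
  "idempotent_semimodule M madd \<longleftrightarrow> (\<forall>x\<in>M. madd x x = x)"

definition subsemimodule ::
  "'a set \<Rightarrow> 'b set \<Rightarrow> ('b \<Rightarrow> 'b \<Rightarrow> 'b) \<Rightarrow> ('a \<Rightarrow> 'b \<Rightarrow> 'b) \<Rightarrow> 'b set \<Rightarrow> bool" where
  "subsemimodule R M madd act N \<longleftrightarrow>
     N \<subseteq> M \<and>
     (\<forall>x\<in>N. \<forall>y\<in>N. madd x y \<in> N) \<and>
     (\<forall>r\<in>R. \<forall>x\<in>N. act r x \<in> N)"

definition semimodule_congruence ::
  "'a set \<Rightarrow> 'b set \<Rightarrow> ('b \<Rightarrow> 'b \<Rightarrow> 'b) \<Rightarrow> ('a \<Rightarrow> 'b \<Rightarrow> 'b) \<Rightarrow> ('b \<times> 'b) set \<Rightarrow> bool" where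
  "semimodule_congruence R M madd act \<theta> \<longleftrightarrow>
     equiv M \<theta> \<and>
     (\<forall>x y u v. (x, y) \<in> \<theta> \<longrightarrow> (u, v) \<in> \<theta> \<longrightarrow> (madd x u, madd y v) \<in> \<theta>) \<and>
     (\<forall>r\<in>R. \<forall>x y. (x, y) \<in> \<theta> \<longrightarrow> (act r x, act r y) \<in> \<theta>)"

definition quasitrivial :: "'a set \<Rightarrow> 'b set \<Rightarrow> ('a \<Rightarrow> 'b \<Rightarrow> 'b) \<Rightarrow> bool" where
  "quasitrivial R M act \<longleftrightarrow> (\<forall>r\<in>R. \<forall>s\<in>R. \<forall>x\<in>M. act r x = act s x)"

definition id_quasitrivial :: "'a set \<Rightarrow> 'b set \<Rightarrow> ('a \<Rightarrow> 'b \<Rightarrow> 'b) \<Rightarrow> bool" where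
  "id_quasitrivial R M act \<longleftrightarrow> (\<forall>r\<in>R. \<forall>x\<in>M. act r x = x)"

definition sub_irreducible ::
  "'a set \<Rightarrow> 'b set \<Rightarrow> ('b \<Rightarrow> 'b \<Rightarrow> 'b) \<Rightarrow> ('a \<Rightarrow> 'b \<Rightarrow> 'b) \<Rightarrow> bool" where
  "sub_irreducible R M madd act \<longleftrightarrow>
     \<not> quasitrivial R M act \<and>
     (\<forall>N. subsemimodule R M madd act N \<and> N \<subset> M \<longrightarrow> id_quasitrivial R N act)"

definition quotient_irreducible ::
  "'a set \<Rightarrow> 'b set \<Rightarrow> ('b \<Rightarrow> 'b \<Rightarrow> 'b) \<Rightarrow> ('a \<Rightarrow> 'b \<Rightarrow> 'b) \<Rightarrow> bool" where
  "quotient_irreducible R M madd act \<longleftrightarrow>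
     \<not> quasitrivial R M act \<and>
     (\<forall>\<theta>. semimodule_congruence R M madd act \<theta> \<longrightarrow> \<theta> = Id_on M \<or> \<theta> = M \<times> M)"

definition irreducible_semimodule ::
  "'a set \<Rightarrow> 'b set \<Rightarrow> ('b \<Rightarrow> 'b \<Rightarrow> 'b) \<Rightarrow> ('a \<Rightarrow> 'b \<Rightarrow> 'b) \<Rightarrow> bool" where
  "irreducible_semimodule R M madd act \<longleftrightarrow>
     sub_irreducible R M madd act \<and> quotient_irreducible R M madd act"

end

theory Submission
  imports Defs
begin

text \<open>Take a finite idempotent semimodule that is not quasitrivial and has as few elements as
  possible; R acting on itself shows that one exists. By minimality, its proper subsemimodules
  and proper quotients are quasitrivial. Simplicity of R makes every non-quasitrivial
  semimodule faithful, and in a simple additively idempotent semiring with more than two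
  elements the product depends on both factors. Together these force the minimal semimodule
  to be cyclic and to have its points separated by the action, and these two facts give
  sub- and quotient-irreducibility.\<close>

context
  fixes R :: "'a set" and add mul :: "'a \<Rightarrow> 'a \<Rightarrow> 'a" and M :: "'b set" and madd act
  assumes sm: "semimodule R add mul M madd act"
begin

lemma semimodule_madd_closed: "x \<in> M \<Longrightarrow> y \<in> M \<Longrightarrow> madd x y \<in> M"
  and semimodule_act_closed: "r \<in> R \<Longrightarrow> x \<in> M \<Longrightarrow> act r x \<in> M"
  and semimodule_act_mul: "r \<in> R \<Longrightarrow> s \<in> R \<Longrightarrow> x \<in> M \<Longrightarrow> act r (act s x) = act (mul r s) x"
  and semimodule_act_add: "r \<in> R \<Longrightarrow> s \<in> R \<Longrightarrow> x \<in> M \<Longrightarrow> act (add r s) x = madd (act r x) (act s x)"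
  and semimodule_act_madd: "r \<in> R \<Longrightarrow> x \<in> M \<Longrightarrow> y \<in> M \<Longrightarrow> act r (madd x y) = madd (act r x) (act r y)"
  using sm unfolding semimodule_def by blast+

end

definition finite_idempotent_nonquasitrivial ::
  "'a set \<Rightarrow> ('a \<Rightarrow> 'a \<Rightarrow> 'a) \<Rightarrow> ('a \<Rightarrow> 'a \<Rightarrow> 'a) \<Rightarrow>
   'b set \<Rightarrow> ('b \<Rightarrow> 'b \<Rightarrow> 'b) \<Rightarrow> ('a \<Rightarrow> 'b \<Rightarrow> 'b) \<Rightarrow> bool" where
  "finite_idempotent_nonquasitrivial R add mul M madd act \<longleftrightarrow>
     finite M \<and> semimodule R add mul M madd act \<and> idempotent_semimodule M madd \<and>
     \<not> quasitrivial R M act"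

lemma semimodule_regular: "semiring R add mul \<Longrightarrow> semimodule R add mul R add mul"
  unfolding semiring_def semimodule_def by (intro conjI; (elim conjE)?; simp)

lemma semimodule_subsemimodule:
  assumes "semimodule R add mul M madd act" and "subsemimodule R M madd act N" and "N \<noteq> {}"
  shows "semimodule R add mul N madd act"
  using assms unfolding semimodule_def subsemimodule_def
  by (intro conjI; (elim conjE)?; simp add: subset_iff)

lemma subsemimodule_orbit:
  assumes "semiring R add mul" and "semimodule R add mul M madd act" and "x \<in> M"
  shows "subsemimodule R M madd act ((\<lambda>r. act r x) ` R)"
  unfolding subsemimodule_def
proof (intro conjI ballI subsetI)
  show "y \<in> M" if "y \<in> (\<lambda>r. act r x) ` R" for y
    using that assms(2,3) by (auto simp: semimodule_def)
  show "madd y z \<in> (\<lambda>r. act r x) ` R" if "y \<in> (\<lambda>r. act r x) ` R" "z \<in> (\<lambda>r. act r x) ` R" for y z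
  proof -
    from that obtain a b where "a \<in> R" "b \<in> R" "y = act a x" "z = act b x" by blast
    with assms show ?thesis
      unfolding semiring_def semimodule_def by (auto intro!: image_eqI[of _ _ "add a b"])
  qed
  show "act s y \<in> (\<lambda>r. act r x) ` R" if "s \<in> R" "y \<in> (\<lambda>r. act r x) ` R" for s y
  proof -
    from that obtain a where "a \<in> R" "y = act a x" by blast
    with assms \<open>s \<in> R\<close> show ?thesis
      unfolding semiring_def semimodule_def by (auto intro!: image_eqI[of _ _ "mul s a"])
  qed
qed

lemma finite_idempotent_nonquasitrivial_transfer:
  assumes bij: "bij_betw g A B" and A: "finite_idempotent_nonquasitrivial R add mul A madd act"
  defines "h \<equiv> inv_into A g"
  shows "finite_idempotent_nonquasitrivial R add mul B
           (\<lambda>x y. g (madd (h x) (h y))) (\<lambda>r x. g (act r (h x)))"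
proof -
  from A have fin: "finite A" and sm: "semimodule R add mul A madd act"
    and idem: "idempotent_semimodule A madd" and nq: "\<not> quasitrivial R A act"
    by (simp_all add: finite_idempotent_nonquasitrivial_def)
  have h_in: "h x \<in> A" if "x \<in> B" for x
    using that bij unfolding h_def bij_betw_def by (auto intro: inv_into_into)
  have g_h: "g (h x) = x" if "x \<in> B" for x
    using that bij unfolding h_def bij_betw_def by (auto intro: f_inv_into_f)
  have h_g: "h (g a) = a" if "a \<in> A" for a
    using that bij unfolding h_def bij_betw_def by (auto intro: inv_into_f_f)
  have g_in: "g a \<in> B" if "a \<in> A" for a
    using that bij by (auto simp: bij_betw_def)
  have "finite B" using fin bij bij_betw_finite by blast
  moreover have "semimodule R add mul B (\<lambda>x y. g (madd (h x) (h y))) (\<lambda>r x. g (act r (h x)))"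
    using sm g_in unfolding semimodule_def by (auto simp: h_in g_h h_g)
  moreover have "idempotent_semimodule B (\<lambda>x y. g (madd (h x) (h y)))"
    using idem by (auto simp: idempotent_semimodule_def h_in g_h)
  moreover have "\<not> quasitrivial R B (\<lambda>r x. g (act r (h x)))"
  proof
    assume "quasitrivial R B (\<lambda>r x. g (act r (h x)))"
    then have "g (act r a) = g (act s a)" if "r \<in> R" "s \<in> R" "a \<in> A" for r s a
      using that g_in[OF \<open>a \<in> A\<close>] h_g[OF \<open>a \<in> A\<close>] unfolding quasitrivial_def by metis
    moreover have "act r a \<in> A" if "r \<in> R" "a \<in> A" for r a
      using sm that by (simp add: semimodule_def)
    ultimately have "quasitrivial R A act"
      using bij unfolding quasitrivial_def bij_betw_def by (meson inj_onD)
    with nq show False ..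
  qed
  ultimately show ?thesis by (simp add: finite_idempotent_nonquasitrivial_def)
qed

lemma finite_idempotent_nonquasitrivial_nat_copy:
  assumes "finite_idempotent_nonquasitrivial R add mul A madd act"
  obtains B :: "nat set" and madd' act'
  where "finite_idempotent_nonquasitrivial R add mul B madd' act'" "card B = card A"
proof -
  obtain g where "bij_betw g A {0..<card A}"
    using assms ex_bij_betw_finite_nat by (auto simp: finite_idempotent_nonquasitrivial_def)
  from finite_idempotent_nonquasitrivial_transfer[OF this assms] that show thesis by simp
qed

definition quotient_madd :: "('b \<times> 'b) set \<Rightarrow> ('b \<Rightarrow> 'b \<Rightarrow> 'b) \<Rightarrow> 'b set \<Rightarrow> 'b set \<Rightarrow> 'b set" where
  "quotient_madd \<theta> madd X Y = (\<Union>x\<in>X. \<Union>y\<in>Y. \<theta>``{madd x y})"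

definition quotient_act :: "('b \<times> 'b) set \<Rightarrow> ('a \<Rightarrow> 'b \<Rightarrow> 'b) \<Rightarrow> 'a \<Rightarrow> 'b set \<Rightarrow> 'b set" where
  "quotient_act \<theta> act r X = (\<Union>x\<in>X. \<theta>``{act r x})"

context
  fixes R :: "'a set" and M :: "'b set" and madd act \<theta>
  assumes cong: "semimodule_congruence R M madd act \<theta>"
begin

lemma congruence_equiv: "equiv M \<theta>"
  using cong by (simp add: semimodule_congruence_def)

lemma quotient_madd_classes:
  assumes "x \<in> M" "y \<in> M"
  shows "quotient_madd \<theta> madd (\<theta>``{x}) (\<theta>``{y}) = \<theta>``{madd x y}"
proof -
  have "congruent2 \<theta> \<theta> (\<lambda>x y. \<theta>``{madd x y})"
    using cong by (auto intro!: congruent2I' equiv_class_eq[OF congruence_equiv]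
        simp: semimodule_congruence_def)
  then show ?thesis
    unfolding quotient_madd_def using UN_equiv_class2 congruence_equiv assms by metis
qed

lemma quotient_act_class:
  assumes "r \<in> R" "x \<in> M"
  shows "quotient_act \<theta> act r (\<theta>``{x}) = \<theta>``{act r x}"
proof -
  have "(\<lambda>x. \<theta>``{act r x}) respects \<theta>"
    using cong assms(1) by (auto simp: congruent_def semimodule_congruence_def
        intro!: equiv_class_eq[OF congruence_equiv])
  then show ?thesis
    unfolding quotient_act_def using UN_equiv_class congruence_equiv assms(2) by metis
qed

lemma ball_quotient_iff: "(\<forall>X\<in>M//\<theta>. P X) \<longleftrightarrow> (\<forall>x\<in>M. P (\<theta>``{x}))"
  by (auto simp: quotient_def)

lemma semimodule_quotient:
  assumes "semiring R add mul" and "semimodule R add mul M madd act"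
  shows "semimodule R add mul (M//\<theta>) (quotient_madd \<theta> madd) (quotient_act \<theta> act)"
  using assms unfolding semiring_def semimodule_def ball_quotient_iff
  by (auto simp: quotient_madd_classes quotient_act_class quotientI)

lemma idempotent_semimodule_quotient:
  assumes "idempotent_semimodule M madd"
  shows "idempotent_semimodule (M//\<theta>) (quotient_madd \<theta> madd)"
  using assms unfolding idempotent_semimodule_def ball_quotient_iff
  by (simp add: quotient_madd_classes)

lemma quasitrivial_quotient_iff:
  assumes "semimodule R add mul M madd act"
  shows "quasitrivial R (M//\<theta>) (quotient_act \<theta> act) \<longleftrightarrow>
    (\<forall>r\<in>R. \<forall>s\<in>R. \<forall>x\<in>M. (act r x, act s x) \<in> \<theta>)"
  using assms unfolding quasitrivial_def ball_quotient_iff semimodule_def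
  by (simp add: quotient_act_class eq_equiv_class_iff[OF congruence_equiv])

end

lemma card_quotient_less:
  assumes "finite M" and "equiv M \<theta>" and "\<theta> \<noteq> Id_on M"
  shows "card (M//\<theta>) < card M"
proof -
  have "\<not> inj_on (\<lambda>x. \<theta>``{x}) M"
  proof
    assume "inj_on (\<lambda>x. \<theta>``{x}) M"
    then have "\<theta> \<subseteq> Id_on M"
      using assms(2) equiv_type[OF assms(2)] by (auto dest: inj_onD equiv_class_eq)
    moreover have "Id_on M \<subseteq> \<theta>"
      using assms(2) by (auto simp: equiv_def refl_on_def)
    ultimately show False using assms(3) by blast
  qed
  then have "card ((\<lambda>x. \<theta>``{x}) ` M) < card M"
    using assms(1) card_image_le inj_on_iff_eq_card le_neq_implies_less by metis
  moreover have "M//\<theta> = (\<lambda>x. \<theta>``{x}) ` M" by (auto simp: quotient_def)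
  ultimately show ?thesis by simp
qed

definition op_compatible :: "('b \<times> 'b) set \<Rightarrow> ('b \<Rightarrow> 'b \<Rightarrow> 'b) \<Rightarrow> bool" where
  "op_compatible \<theta> f \<longleftrightarrow> (\<forall>a b c d. (a, b) \<in> \<theta> \<longrightarrow> (c, d) \<in> \<theta> \<longrightarrow> (f a c, f b d) \<in> \<theta>)"

lemma semiring_congruence_iff:
  "semiring_congruence R add mul \<theta> \<longleftrightarrow> equiv R \<theta> \<and> op_compatible \<theta> add \<and> op_compatible \<theta> mul"
  by (auto simp: semiring_congruence_def op_compatible_def)

locale idempotent_semiring =
  fixes R :: "'a set" and add mul :: "'a \<Rightarrow> 'a \<Rightarrow> 'a"
  assumes semiring: "semiring R add mul"
    and add_idempotent: "add_idempotent R add"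
begin

lemma add_closed: "a \<in> R \<Longrightarrow> b \<in> R \<Longrightarrow> add a b \<in> R"
  and mul_closed: "a \<in> R \<Longrightarrow> b \<in> R \<Longrightarrow> mul a b \<in> R"
  and add_assoc: "a \<in> R \<Longrightarrow> b \<in> R \<Longrightarrow> c \<in> R \<Longrightarrow> add (add a b) c = add a (add b c)"
  and add_commute: "a \<in> R \<Longrightarrow> b \<in> R \<Longrightarrow> add a b = add b a"
  and mul_assoc: "a \<in> R \<Longrightarrow> b \<in> R \<Longrightarrow> c \<in> R \<Longrightarrow> mul (mul a b) c = mul a (mul b c)"
  and distrib_left: "a \<in> R \<Longrightarrow> b \<in> R \<Longrightarrow> c \<in> R \<Longrightarrow> mul a (add b c) = add (mul a b) (mul a c)"
  and distrib_right: "a \<in> R \<Longrightarrow> b \<in> R \<Longrightarrow> c \<in> R \<Longrightarrow> mul (add a b) c = add (mul a c) (mul b c)"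
  using semiring unfolding semiring_def by blast+

lemma add_idem: "a \<in> R \<Longrightarrow> add a a = a"
  using add_idempotent by (simp add: add_idempotent_def)

text \<open>Relate u and v when both or neither lie below a fixed a in the semilattice order
  (u \<le> a \<longleftrightarrow> u + a = a). Since u + v \<le> a iff u \<le> a and v \<le> a, this is compatible with
  addition; having at most two classes, it identifies two of any three elements.\<close>
lemma exists_nontrivial_add_congruence:
  assumes "card R > 2"
  obtains \<theta> where "equiv R \<theta>" "op_compatible \<theta> add" "\<theta> \<noteq> Id_on R" "\<theta> \<noteq> R \<times> R"
proof -
  have fin: "finite R" using assms card.infinite by fastforce
  obtain a y where a: "a \<in> R" and y: "y \<in> R" and y_not_below: "add y a \<noteq> a"
  proof (rule ccontr)
    assume "\<not> thesis"
    with that have "add y a = a" if "a \<in> R" "y \<in> R" for a y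
      using that by blast
    then have "a = y" if "a \<in> R" "y \<in> R" for a y
      using that add_commute by metis
    then have "card R \<le> 1" using card_le_Suc0_iff_eq[OF fin] by simp
    with assms show False by simp
  qed
  define below where "below u \<longleftrightarrow> add u a = a" for u
  have below_add: "below (add u v) \<longleftrightarrow> below u \<and> below v" if u: "u \<in> R" and v: "v \<in> R" for u v
  proof -
    have below_left: "below p" if "below (add p q)" "p \<in> R" "q \<in> R" for p q
    proof -
      have "add p a = add p (add (add p q) a)" using that(1) by (simp add: below_def)
      also have "\<dots> = add (add p q) a"
        using that(2,3) a by (simp add: add_assoc[symmetric] add_closed add_idem)
      finally show ?thesis using that(1) by (simp add: below_def)
    qed
    show ?thesis
    proof
      assume "below (add u v)"
      then show "below u \<and> below v"
        using below_left u v add_commute by metis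
    next
      assume "below u \<and> below v"
      then show "below (add u v)" using u v a by (simp add: below_def add_assoc)
    qed
  qed
  define \<theta> where "\<theta> = {(u, v). u \<in> R \<and> v \<in> R \<and> (below u \<longleftrightarrow> below v)}"
  show thesis
  proof
    show "equiv R \<theta>" unfolding equiv_def refl_on_def sym_def trans_def \<theta>_def by auto
    show "op_compatible \<theta> add"
      unfolding op_compatible_def \<theta>_def using below_add by (auto simp: add_closed)
    show "\<theta> \<noteq> R \<times> R"
      using a y y_not_below add_idem[OF a] by (auto simp: \<theta>_def below_def)
    have "\<not> inj_on below R"
    proof
      assume "inj_on below R"
      then have "card R \<le> card (UNIV :: bool set)"
        by (rule card_inj_on_le) simp_all
      with assms show False by simp
    qed
    then obtain u v where "u \<in> R" "v \<in> R" "u \<noteq> v" "below u = below v"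
      unfolding inj_on_def by blast
    then show "\<theta> \<noteq> Id_on R" by (auto simp: \<theta>_def)
  qed
qed

end

locale simple_idempotent_semiring = idempotent_semiring +
  assumes simple: "semiring_congruence R add mul \<theta> \<Longrightarrow> \<theta> = Id_on R \<or> \<theta> = R \<times> R"
    and card_gt_2: "card R > 2"
begin

lemma finite_carrier: "finite R"
  using card_gt_2 card.infinite by fastforce

lemma exists_mult_incompatible_equiv:
  obtains \<theta> where "equiv R \<theta>" "\<not> op_compatible \<theta> mul"
proof -
  obtain \<theta> where "equiv R \<theta>" "op_compatible \<theta> add" "\<theta> \<noteq> Id_on R" "\<theta> \<noteq> R \<times> R"
    using exists_nontrivial_add_congruence[OF card_gt_2] .
  with simple that show thesis by (auto simp: semiring_congruence_iff)
qed

text \<open>If the left factor were irrelevant, the kernel of c \<mapsto> e c would be a congruence,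
  forcing multiplication to be either the second projection or constant; both are compatible
  with every equivalence.\<close>
lemma mult_depends_on_left_factor:
  obtains a b c where "a \<in> R" "b \<in> R" "c \<in> R" "mul a c \<noteq> mul b c"
proof (rule ccontr)
  assume "\<not> thesis"
  with that have left_irrelevant: "mul a c = mul b c" if "a \<in> R" "b \<in> R" "c \<in> R" for a b c
    using that by blast
  obtain e where e: "e \<in> R" using card_gt_2 by fastforce
  define g where "g c = mul e c" for c
  have g_closed: "g c \<in> R" if "c \<in> R" for c using that e by (simp add: g_def mul_closed)
  have mul_eq_g: "mul a c = g c" if "a \<in> R" "c \<in> R" for a c
    unfolding g_def using left_irrelevant that e by blast
  have g_idem: "g (g c) = g c" if c: "c \<in> R" for c
    using mul_eq_g[OF mul_closed[OF e e] c] by (simp add: g_def mul_assoc e c)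
  define \<theta> where "\<theta> = {(u, v). u \<in> R \<and> v \<in> R \<and> g u = g v}"
  have "semiring_congruence R add mul \<theta>"
    unfolding semiring_congruence_iff op_compatible_def
  proof (intro conjI allI impI)
    show "equiv R \<theta>" unfolding equiv_def refl_on_def sym_def trans_def \<theta>_def by auto
    fix a b c d assume "(a, b) \<in> \<theta>" "(c, d) \<in> \<theta>"
    then show "(add a c, add b d) \<in> \<theta>"
      using e by (auto simp: \<theta>_def g_def distrib_left add_closed)
    from \<open>(a, b) \<in> \<theta>\<close> \<open>(c, d) \<in> \<theta>\<close> show "(mul a c, mul b d) \<in> \<theta>"
      by (auto simp: \<theta>_def mul_closed mul_eq_g g_idem g_closed)
  qed
  then have "\<theta> = Id_on R \<or> \<theta> = R \<times> R" by (rule simple)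
  then have "op_compatible \<theta>' mul" if eq: "equiv R \<theta>'" for \<theta>'
    unfolding op_compatible_def
  proof (intro allI impI)
    fix a b c d assume "(a, b) \<in> \<theta>'" and cd: "(c, d) \<in> \<theta>'"
    then have R: "a \<in> R" "b \<in> R" "c \<in> R" "d \<in> R" using equiv_type[OF eq] by auto
    from \<open>\<theta> = Id_on R \<or> \<theta> = R \<times> R\<close> show "(mul a c, mul b d) \<in> \<theta>'"
    proof
      assume "\<theta> = Id_on R"
      then have "g c = c" "g d = d" using g_idem g_closed R unfolding \<theta>_def by blast+
      then show ?thesis using cd R by (simp add: mul_eq_g)
    next
      assume "\<theta> = R \<times> R"
      then have "g c = g d" using R unfolding \<theta>_def by blast
      moreover have "(g d, g d) \<in> \<theta>'" using eq g_closed R by (simp add: equiv_def refl_on_def)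
      ultimately show ?thesis using R by (simp add: mul_eq_g)
    qed
  qed
  then show False using exists_mult_incompatible_equiv by blast
qed

lemma simple_idempotent_semiring_opposite: "simple_idempotent_semiring R add (\<lambda>a b. mul b a)"
proof unfold_locales
  show "semiring R add (\<lambda>a b. mul b a)"
    using semiring unfolding semiring_def
    by (simp add: add_closed mul_closed add_assoc mul_assoc distrib_left distrib_right add_commute)
  show "add_idempotent R add" by (rule add_idempotent)
  show "card R > 2" by (rule card_gt_2)
  fix \<theta> assume "semiring_congruence R add (\<lambda>a b. mul b a) \<theta>"
  then have "semiring_congruence R add mul \<theta>"
    by (auto simp: semiring_congruence_iff op_compatible_def)
  then show "\<theta> = Id_on R \<or> \<theta> = R \<times> R" by (rule simple)
qed

lemma mult_depends_on_right_factor: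
  obtains a b c where "a \<in> R" "b \<in> R" "c \<in> R" "mul a b \<noteq> mul a c"
proof -
  interpret opposite: simple_idempotent_semiring R add "\<lambda>a b. mul b a" by (rule simple_idempotent_semiring_opposite)
  from opposite.mult_depends_on_left_factor that show thesis by blast
qed

lemma semimodule_faithful:
  assumes sm: "semimodule R add mul M madd act" and nq: "\<not> quasitrivial R M act"
    and "r \<in> R" "s \<in> R" and same_action: "\<forall>x\<in>M. act r x = act s x"
  shows "r = s"
proof -
  define \<theta> where "\<theta> = {(r, s). r \<in> R \<and> s \<in> R \<and> (\<forall>x\<in>M. act r x = act s x)}"
  have "semiring_congruence R add mul \<theta>"
    unfolding semiring_congruence_iff op_compatible_def
  proof (intro conjI allI impI)
    show "equiv R \<theta>" unfolding equiv_def refl_on_def sym_def trans_def \<theta>_def by auto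
    fix a b c d assume "(a, b) \<in> \<theta>" "(c, d) \<in> \<theta>"
    then have R: "a \<in> R" "b \<in> R" "c \<in> R" "d \<in> R"
      and ab: "\<forall>x\<in>M. act a x = act b x" and cd: "\<forall>x\<in>M. act c x = act d x"
      by (auto simp: \<theta>_def)
    then show "(add a c, add b d) \<in> \<theta>"
      by (simp add: \<theta>_def add_closed semimodule_act_add[OF sm])
    have "act (mul a c) x = act (mul b d) x" if "x \<in> M" for x
    proof -
      have "act (mul a c) x = act a (act c x)" using R that by (simp add: semimodule_act_mul[OF sm])
      also have "\<dots> = act b (act d x)" using R ab cd that by (simp add: semimodule_act_closed[OF sm])
      also have "\<dots> = act (mul b d) x" using R that by (simp add: semimodule_act_mul[OF sm])
      finally show ?thesis .
    qed
    with R show "(mul a c, mul b d) \<in> \<theta>" by (simp add: \<theta>_def mul_closed)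
  qed
  then have "\<theta> = Id_on R \<or> \<theta> = R \<times> R" by (rule simple)
  moreover have "\<theta> \<noteq> R \<times> R"
    using nq unfolding quasitrivial_def \<theta>_def by blast
  ultimately show "r = s"
    using assms(3,4) same_action unfolding \<theta>_def by auto
qed

end

lemma simple_idempotent_semiringI:
  assumes "simple_semiring R add mul" and "add_idempotent R add" and "card R > 2"
  shows "simple_idempotent_semiring R add mul"
  using assms by unfold_locales (auto simp: simple_semiring_def)

text \<open>Minimality can only be quantified over one carrier type; nat suffices because every
  finite candidate has a copy on nat.\<close>
locale minimal_semimodule = simple_idempotent_semiring R add mul
  for R :: "'a set" and add mul :: "'a \<Rightarrow> 'a \<Rightarrow> 'a" +
  fixes M :: "'b set" and madd :: "'b \<Rightarrow> 'b \<Rightarrow> 'b" and act :: "'a \<Rightarrow> 'b \<Rightarrow> 'b"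
  assumes candidate: "finite_idempotent_nonquasitrivial R add mul M madd act"
    and minimal: "\<And>(N :: nat set) nadd nact.
      finite_idempotent_nonquasitrivial R add mul N nadd nact \<Longrightarrow> card M \<le> card N"
begin

lemma finite: "finite M"
  and semimodule: "semimodule R add mul M madd act"
  and idempotent: "idempotent_semimodule M madd"
  and not_quasitrivial: "\<not> quasitrivial R M act"
  using candidate by (simp_all add: finite_idempotent_nonquasitrivial_def)

lemma minimal_card_le:
  assumes "finite_idempotent_nonquasitrivial R add mul N nadd nact"
  shows "card M \<le> card N"
  using finite_idempotent_nonquasitrivial_nat_copy[OF assms] minimal by metis

lemma proper_subsemimodule_quasitrivial:
  assumes sub: "subsemimodule R M madd act N" and "N \<subset> M"
  shows "quasitrivial R N act"
proof (rule ccontr)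
  assume nq: "\<not> quasitrivial R N act"
  then have "N \<noteq> {}" by (auto simp: quasitrivial_def)
  then have "finite_idempotent_nonquasitrivial R add mul N madd act"
    using nq semimodule_subsemimodule[OF semimodule sub] finite \<open>N \<subset> M\<close> idempotent
    by (auto simp: finite_idempotent_nonquasitrivial_def idempotent_semimodule_def
        intro: finite_subset)
  then have "card M \<le> card N" by (rule minimal_card_le)
  with psubset_card_mono[OF finite \<open>N \<subset> M\<close>] show False by simp
qed

lemma proper_quotient_quasitrivial:
  assumes cong: "semimodule_congruence R M madd act \<theta>" and "\<theta> \<noteq> Id_on M"
    and "r \<in> R" "s \<in> R" "x \<in> M"
  shows "(act r x, act s x) \<in> \<theta>"
proof -
  have "quasitrivial R (M//\<theta>) (quotient_act \<theta> act)"
  proof (rule ccontr)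
    assume "\<not> ?thesis"
    then have "finite_idempotent_nonquasitrivial R add mul
        (M//\<theta>) (quotient_madd \<theta> madd) (quotient_act \<theta> act)"
      using finite equiv_type[OF congruence_equiv[OF cong]]
        semimodule_quotient[OF cong semiring semimodule]
        idempotent_semimodule_quotient[OF cong idempotent]
      by (auto simp: finite_idempotent_nonquasitrivial_def intro: finite_quotient)
    then have "card M \<le> card (M//\<theta>)" by (rule minimal_card_le)
    with card_quotient_less[OF finite congruence_equiv[OF cong] \<open>\<theta> \<noteq> Id_on M\<close>]
    show False by simp
  qed
  with assms(3-5) show ?thesis
    using quasitrivial_quotient_iff[OF cong semimodule] by blast
qed

text \<open>Otherwise every orbit Rx is a proper subsemimodule, hence quasitrivial, and
  faithfulness turns t(rx) = u(rx) into tr = ur.\<close>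
lemma cyclic:
  obtains x0 where "x0 \<in> M" "\<forall>y\<in>M. \<exists>r\<in>R. y = act r x0"
proof (rule ccontr)
  assume "\<not> thesis"
  with that have proper: "(\<lambda>r. act r x) ` R \<subset> M" if "x \<in> M" for x
    using that semimodule_act_closed[OF semimodule] by blast
  have "mul t r = mul u r" if tur: "t \<in> R" "u \<in> R" "r \<in> R" for t u r
  proof (rule semimodule_faithful[OF semimodule not_quasitrivial])
    show "\<forall>x\<in>M. act (mul t r) x = act (mul u r) x"
    proof
      fix x assume x: "x \<in> M"
      have "quasitrivial R ((\<lambda>r. act r x) ` R) act"
        using proper_subsemimodule_quasitrivial subsemimodule_orbit[OF semiring semimodule x]
          proper[OF x] by blast
      then have "act t (act r x) = act u (act r x)"
        using tur unfolding quasitrivial_def by blast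
      then show "act (mul t r) x = act (mul u r) x"
        using semimodule_act_mul[OF semimodule] tur x by simp
    qed
  qed (use mul_closed tur in auto)
  then show False using mult_depends_on_left_factor by metis
qed

text \<open>The kernel of the action is a congruence; were it proper, the quotient would be
  quasitrivial and faithfulness would turn t(rx) = t(sx) into tr = ts.\<close>
lemma act_separates:
  assumes "x \<in> M" "y \<in> M" and same_action: "\<And>r. r \<in> R \<Longrightarrow> act r x = act r y"
  shows "x = y"
proof -
  define \<psi> where "\<psi> = {(x, y). x \<in> M \<and> y \<in> M \<and> (\<forall>r\<in>R. act r x = act r y)}"
  have cong: "semimodule_congruence R M madd act \<psi>"
    unfolding semimodule_congruence_def \<psi>_def equiv_def refl_on_def sym_def trans_def
    by (auto simp: semimodule_madd_closed[OF semimodule] semimodule_act_madd[OF semimodule]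
        semimodule_act_closed[OF semimodule] semimodule_act_mul[OF semimodule] mul_closed)
  have "\<psi> = Id_on M"
  proof (rule ccontr)
    assume "\<psi> \<noteq> Id_on M"
    have "mul t r = mul t s" if trs: "t \<in> R" "r \<in> R" "s \<in> R" for t r s
    proof (rule semimodule_faithful[OF semimodule not_quasitrivial])
      show "\<forall>z\<in>M. act (mul t r) z = act (mul t s) z"
      proof
        fix z assume z: "z \<in> M"
        have "(act r z, act s z) \<in> \<psi>"
          using proper_quotient_quasitrivial[OF cong \<open>\<psi> \<noteq> Id_on M\<close>] trs z by blast
        then have "act t (act r z) = act t (act s z)" using trs by (simp add: \<psi>_def)
        then show "act (mul t r) z = act (mul t s) z"
          using semimodule_act_mul[OF semimodule] trs z by simp
      qed
    qed (use mul_closed trs in auto)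
    then show False using mult_depends_on_right_factor by metis
  qed
  moreover have "(x, y) \<in> \<psi>" using assms unfolding \<psi>_def by blast
  ultimately show ?thesis by auto
qed

lemma sub_irreducible: "sub_irreducible R M madd act"
  unfolding sub_irreducible_def id_quasitrivial_def
proof (intro conjI not_quasitrivial allI impI ballI)
  fix N r n assume "subsemimodule R M madd act N \<and> N \<subset> M" and r: "r \<in> R" and n: "n \<in> N"
  then have N: "subsemimodule R M madd act N" "N \<subset> M" by auto
  then have n_M: "n \<in> M" and rn_N: "act r n \<in> N"
    using n r by (auto simp: subsemimodule_def)
  have quasi: "quasitrivial R N act" using proper_subsemimodule_quasitrivial N .
  have "act t (act r n) = act t n" if t: "t \<in> R" for t
  proof -
    have "act t (act r n) = act (mul t r) n" using semimodule_act_mul[OF semimodule] t r n_M .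
    also have "\<dots> = act t n" using quasi mul_closed[OF t r] t n unfolding quasitrivial_def by blast
    finally show ?thesis .
  qed
  moreover have "act r n \<in> M" using rn_N N by (auto simp: subsemimodule_def)
  ultimately show "act r n = n" using act_separates n_M by blast
qed

lemma quotient_irreducible: "quotient_irreducible R M madd act"
  unfolding quotient_irreducible_def
proof (intro conjI not_quasitrivial allI impI)
  fix \<theta> assume cong: "semimodule_congruence R M madd act \<theta>"
  show "\<theta> = Id_on M \<or> \<theta> = M \<times> M"
  proof (cases "\<theta> = Id_on M")
    case proper: False
    obtain x0 where x0: "x0 \<in> M" and generates: "\<forall>y\<in>M. \<exists>r\<in>R. y = act r x0"
      by (rule cyclic)
    have "M \<times> M \<subseteq> \<theta>"
    proof clarify
      fix y z assume "y \<in> M" "z \<in> M"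
      then obtain a b where "a \<in> R" "b \<in> R" "y = act a x0" "z = act b x0"
        using generates by metis
      then show "(y, z) \<in> \<theta>" using proper_quotient_quasitrivial[OF cong proper] x0 by blast
    qed
    with equiv_type[OF congruence_equiv[OF cong]] show ?thesis by blast
  qed simp
qed

lemma irreducible: "irreducible_semimodule R M madd act"
  by (simp add: irreducible_semimodule_def sub_irreducible quotient_irreducible)

end

lemma (in simple_idempotent_semiring) exists_minimal_semimodule:
  obtains M :: "nat set" and madd act where "minimal_semimodule R add mul M madd act"
proof -
  have "finite_idempotent_nonquasitrivial R add mul R add mul"
    using finite_carrier semimodule_regular[OF semiring] add_idempotent
      mult_depends_on_left_factor
    unfolding finite_idempotent_nonquasitrivial_def idempotent_semimodule_def
      add_idempotent_def quasitrivial_def by metis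
  then obtain B :: "nat set" and badd bact
    where "finite_idempotent_nonquasitrivial R add mul B badd bact"
    by (rule finite_idempotent_nonquasitrivial_nat_copy)
  define P :: "nat set \<times> (nat \<Rightarrow> nat \<Rightarrow> nat) \<times> ('a \<Rightarrow> nat \<Rightarrow> nat) \<Rightarrow> bool"
    where "P = (\<lambda>(M, madd, act). finite_idempotent_nonquasitrivial R add mul M madd act)"
  have "P (B, badd, bact)" by (simp add: P_def \<open>finite_idempotent_nonquasitrivial R add mul B badd bact\<close>)
  from ex_has_least_nat[of P, OF this, of "\<lambda>S. card (fst S)"]
  obtain S where "P S" and least: "\<forall>S'. P S' \<longrightarrow> card (fst S) \<le> card (fst S')" by blast
  obtain M madd act where S: "S = (M, madd, act)" by (cases S)
  have "finite_idempotent_nonquasitrivial R add mul M madd act"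
    using \<open>P S\<close> by (simp add: S P_def)
  moreover have "card M \<le> card N"
    if "finite_idempotent_nonquasitrivial R add mul N nadd nact" for N :: "nat set" and nadd nact
    using least[rule_format, of "(N, nadd, nact)"] that by (simp add: S P_def)
  ultimately have "minimal_semimodule R add mul M madd act"
    by unfold_locales auto
  then show thesis by (rule that)
qed

theorem proposition2p17:
  fixes R :: "'a set" and add mul :: "'a \<Rightarrow> 'a \<Rightarrow> 'a"
  assumes "finite R"
    and "simple_semiring R add mul"
    and "add_idempotent R add"
    and "card R > 2"
  shows "\<exists>(M :: nat set) (madd :: nat \<Rightarrow> nat \<Rightarrow> nat) (act :: 'a \<Rightarrow> nat \<Rightarrow> nat).
           finite M \<and> semimodule R add mul M madd act \<and>
           idempotent_semimodule M madd \<and> irreducible_semimodule R M madd act"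
proof -
  interpret simple_idempotent_semiring R add mul
    using assms(2-4) by (rule simple_idempotent_semiringI)
  obtain M :: "nat set" and madd act where "minimal_semimodule R add mul M madd act"
    by (rule exists_minimal_semimodule)
  then interpret minimal: minimal_semimodule R add mul M madd act .
  show ?thesis
    using minimal.finite minimal.semimodule minimal.idempotent minimal.irreducible by blast
qed

end
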